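(* Let $3\le a<b$ be integers and for $z\in(0,1)$ let $$\tilde T(z)=\frac{\frac{z}{1-z}Z_0(z)+\ln(1-z)\,Z_1(z)}{a\,b\,(b-a)\,z^{a+b-2}},\qquad Z_j(z)=a(a-1)^j z^{a-1}-b(b-1)^jz^{b-1}.$$ (Wherever $h(z)\ne0$ and $z\neq z_r$, $\tilde T(z)=T(z,1/h(z))$ is the value of the threshold function at the critical point with $\alpha=1/h(z)$.) Then for all $z\in(0,z')$: $\tilde T'(z)>0\iff g(z)>0$; and for all $z\in(z',1)$: $\tilde T'(z)<0\iff g(z)>0$, where $z'=(a/b)^{1/(b-a)}$.
   Context: $T(z,\alpha)=\frac{-\ln(1-z)}{\alpha a z^{a-1}+(1-\alpha)bz^{b-1}}$. $f(z)=\frac{-\ln(1-z)(1-z)}{z}$, $g(z)=f(z)(b-1)(a-1)+\frac1{1-z}+2-b-a$, $h(z)=\frac{a z^{a-b}-b-f(z)(a(a-1)z^{a-b}-b(b-1))}{b((b-1)f(z)-1)}$; $z_r$ is the unique $z\in(0,1)$ with $f(z)=\frac1{b-1}$. *)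

theory Defs
  imports "HOL-Analysis.Analysis"
begin

definition fF :: "real \<Rightarrow> real" where
  "fF z = - ln (1 - z) * (1 - z) / z"

definition gF :: "nat \<Rightarrow> nat \<Rightarrow> real \<Rightarrow> real" where
  "gF a b z = fF z * (real b - 1) * (real a - 1) + 1 / (1 - z) + 2 - real b - real a"

definition Zj :: "nat \<Rightarrow> nat \<Rightarrow> nat \<Rightarrow> real \<Rightarrow> real" where
  "Zj a b j z = real a * (real a - 1) ^ j * z ^ (a - 1) - real b * (real b - 1) ^ j * z ^ (b - 1)"

definition Ttilde :: "nat \<Rightarrow> nat \<Rightarrow> real \<Rightarrow> real" where
  "Ttilde a b z =
     (z / (1 - z) * Zj a b 0 z + ln (1 - z) * Zj a b 1 z)
     / (real a * real b * (real b - real a) * z ^ (a + b - 2))"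

definition zprime :: "nat \<Rightarrow> nat \<Rightarrow> real" where
  "zprime a b = (real a / real b) powr (1 / (real b - real a))"

end

theory Submission
  imports Defs
begin

(* Write Ttilde a b z = N z / (c * z^m) with c = a b (b - a), m = a + b - 2 and
   N z = z/(1-z) Z_0 z + ln(1-z) Z_1 z.  The functions Z_j satisfy z Z_j' = Z_(j+1) and the
   three-term recurrence Z_2 = m Z_1 - (a-1)(b-1) Z_0, since z^(a-1) and z^(b-1) are the
   solutions of the Euler equation with indicial roots a - 1 and b - 1.  Hence the cross terms
   of N' cancel, and the recurrence turns z N' - m N into z/(1-z) Z_0 g.  With the quotient rule
   for N/(c z^m) this gives
        Ttilde' z = Z_0 z * g z / ((1 - z) c z^m),
   a positive denominator times Z_0 g on (0,1).  Finally Z_0 z = z^(a-1) (a - b z^(b-a)) is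
   positive below z' = (a/b)^(1/(b-a)) and negative above it, which yields both equivalences. *)

lemma Zj_has_derivative:
  fixes a b :: nat
  assumes "2 \<le> a" "2 \<le> b" "0 < z"
  shows "((\<lambda>z. Zj a b j z) has_real_derivative Zj a b (Suc j) z / z) (at z)"
proof -
  obtain p where p: "a - 1 = Suc p" using assms by (cases "a - 1") auto
  obtain q where q: "b - 1 = Suc q" using assms by (cases "b - 1") auto
  have ra: "real a - 1 = real (Suc p)" using p assms by auto
  have rb: "real b - 1 = real (Suc q)" using q assms by auto
  show ?thesis
    unfolding Zj_def p q ra rb
    by (rule derivative_eq_intros refl)+ (use assms in \<open>simp add: field_simps\<close>)
qed

text \<open>The Euler-equation recurrence: a - 1 and b - 1 are the roots of
  x^2 - (a + b - 2) x + (a - 1)(b - 1).\<close>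
lemma Zj_recurrence:
  fixes a b :: nat
  assumes "1 \<le> a" "1 \<le> b"
  shows "Zj a b 2 z = real (a + b - 2) * Zj a b 1 z - (real a - 1) * (real b - 1) * Zj a b 0 z"
proof -
  have "real (a + b - 2) = real a + real b - 2" using assms by auto
  then show ?thesis unfolding Zj_def by (simp add: algebra_simps power2_eq_square)
qed

definition numT :: "nat \<Rightarrow> nat \<Rightarrow> real \<Rightarrow> real" where
  "numT a b z = z / (1 - z) * Zj a b 0 z + ln (1 - z) * Zj a b 1 z"

text \<open>Product rule for N; the two mixed terms Z_1/(1-z) cancel, leaving
  N' = Z_0/(1-z)^2 + ln(1-z) Z_2/z.\<close>
lemma numT_has_derivative:
  fixes a b :: nat
  assumes "2 \<le> a" "2 \<le> b" "0 < z" "z < 1"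
  shows "(numT a b has_real_derivative
            Zj a b 0 z / (1 - z)^2 + ln (1 - z) * Zj a b 2 z / z) (at z)"
proof -
  have d0: "((\<lambda>z. Zj a b 0 z) has_real_derivative Zj a b 1 z / z) (at z)"
    using Zj_has_derivative[OF assms(1-3)] by simp
  have d1: "((\<lambda>z. Zj a b 1 z) has_real_derivative Zj a b 2 z / z) (at z)"
    using Zj_has_derivative[OF assms(1-3), of 1] by (simp add: numeral_2_eq_2)
  have "((\<lambda>z. z / (1 - z)) has_real_derivative (1 * (1 - z) - z * (0 - 1)) / ((1 - z) * (1 - z))) (at z)"
    using assms by (intro DERIV_divide DERIV_ident DERIV_diff DERIV_const) auto
  then have d_quot: "((\<lambda>z. z / (1 - z)) has_real_derivative 1 / (1 - z)^2) (at z)"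
    by (simp add: power2_eq_square)
  have d_ln: "((\<lambda>z. ln (1 - z)) has_real_derivative - 1 / (1 - z)) (at z)"
    using DERIV_chain2[OF DERIV_ln_divide DERIV_diff[OF DERIV_const DERIV_ident]] assms by simp
  have d_numT: "(numT a b has_real_derivative
           1 / (1 - z)^2 * Zj a b 0 z + Zj a b 1 z / z * (z / (1 - z))
           + (- 1 / (1 - z) * Zj a b 1 z + Zj a b 2 z / z * ln (1 - z))) (at z)"
    unfolding numT_def using DERIV_add[OF DERIV_mult[OF d_quot d0] DERIV_mult[OF d_ln d1]] .
  have cancel: "1 / (1 - z)^2 * Zj a b 0 z + Zj a b 1 z / z * (z / (1 - z))
           + (- 1 / (1 - z) * Zj a b 1 z + Zj a b 2 z / z * ln (1 - z))
         = Zj a b 0 z / (1 - z)^2 + ln (1 - z) * Zj a b 2 z / z"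
  proof -
    define w where "w = 1 - z"
    have "w \<noteq> 0" "z \<noteq> 0" using assms w_def by auto
    then show ?thesis unfolding w_def[symmetric] by (simp add: field_simps)
  qed
  show ?thesis using d_numT unfolding cancel .
qed

lemma has_derivative_divide_monomial:
  fixes f :: "real \<Rightarrow> real"
  assumes f: "(f has_real_derivative f') (at z)" and "z \<noteq> 0" "c \<noteq> 0"
  shows "((\<lambda>x. f x / (c * x ^ m)) has_real_derivative
           (z * f' - real m * f z) / (c * z ^ Suc m)) (at z)"
proof -
  have "((\<lambda>x. f x / (c * x ^ m)) has_real_derivative
          (f' * (c * z ^ m) - f z * (c * (real m * z ^ (m - 1)))) / (c * z ^ m * (c * z ^ m))) (at z)"
    using DERIV_divide[OF f DERIV_cmult[OF DERIV_pow]] assms by simp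
  moreover have "(f' * (c * z ^ m) - f z * (c * (real m * z ^ (m - 1)))) / (c * z ^ m * (c * z ^ m))
                 = (z * f' - real m * f z) / (c * z ^ Suc m)"
    using assms by (cases m) (simp_all add: field_simps)
  ultimately show ?thesis by simp
qed

lemma numT_key_identity:
  fixes a b :: nat
  assumes "1 \<le> a" "1 \<le> b" "0 < z" "z < 1"
  shows "z * (Zj a b 0 z / (1 - z)^2 + ln (1 - z) * Zj a b 2 z / z)
           - real (a + b - 2) * numT a b z
         = z / (1 - z) * Zj a b 0 z * gF a b z"
proof -
  define m where "m = real (a + b - 2)"
  define P where "P = (real a - 1) * (real b - 1)"
  have "z * (Zj a b 0 z / (1 - z)^2 + ln (1 - z) * Zj a b 2 z / z) - m * numT a b z
        = z * Zj a b 0 z / (1 - z)^2 - ln (1 - z) * P * Zj a b 0 z - m * z / (1 - z) * Zj a b 0 z"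
    unfolding numT_def Zj_recurrence[OF assms(1,2)] m_def[symmetric] P_def[symmetric]
    using assms(3) by (simp add: field_simps)
  also have "\<dots> = z / (1 - z) * Zj a b 0 z * gF a b z"
  proof -
    have "m = real a + real b - 2" unfolding m_def using assms by auto
    then have g: "gF a b z = - ln (1 - z) * (1 - z) / z * P + 1 / (1 - z) - m"
      unfolding gF_def fF_def P_def by (simp add: algebra_simps)
    define w where "w = 1 - z"
    have "w \<noteq> 0" "z \<noteq> 0" using assms w_def by auto
    then show ?thesis unfolding g w_def[symmetric] by (simp add: field_simps power2_eq_square)
  qed
  finally show ?thesis unfolding m_def .
qed

lemma Ttilde_has_derivative:
  fixes a b :: nat
  assumes "2 \<le> a" "a < b" "0 < z" "z < 1"
  shows "(Ttilde a b has_real_derivative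
            Zj a b 0 z * gF a b z / ((1 - z) * (real a * real b * (real b - real a)) * z ^ (a + b - 2))) (at z)"
proof -
  define c where "c = real a * real b * (real b - real a)"
  define m where "m = a + b - 2"
  have "c \<noteq> 0" using assms unfolding c_def by auto
  have T: "Ttilde a b = (\<lambda>x. numT a b x / (c * x ^ m))"
    unfolding Ttilde_def numT_def c_def m_def by auto
  have "(Ttilde a b has_real_derivative
          (z * (Zj a b 0 z / (1 - z)^2 + ln (1 - z) * Zj a b 2 z / z) - real m * numT a b z)
          / (c * z ^ Suc m)) (at z)"
    unfolding T using assms \<open>c \<noteq> 0\<close>
    by (intro has_derivative_divide_monomial numT_has_derivative) auto
  also have "z * (Zj a b 0 z / (1 - z)^2 + ln (1 - z) * Zj a b 2 z / z) - real m * numT a b z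
             = z / (1 - z) * Zj a b 0 z * gF a b z"
    unfolding m_def using assms by (intro numT_key_identity) auto
  also have "z / (1 - z) * Zj a b 0 z * gF a b z / (c * z ^ Suc m)
             = Zj a b 0 z * gF a b z / ((1 - z) * c * z ^ m)"
    using assms by simp
  finally show ?thesis unfolding c_def m_def by (simp add: mult.assoc)
qed

text \<open>Factoring out the lower power of Z_0, which isolates its only sign-carrying factor.\<close>
lemma Zj0_factor:
  fixes a b :: nat
  assumes "1 \<le> a" "a < b"
  shows "Zj a b 0 z = z ^ (a - 1) * (real a - real b * z ^ (b - a))"
proof -
  have "b - 1 = (a - 1) + (b - a)" using assms by auto
  then show ?thesis unfolding Zj_def by (simp add: power_add algebra_simps)
qed

lemma zprime_power:
  fixes a b :: nat
  assumes "1 \<le> a" "a < b"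
  shows "zprime a b > 0" "zprime a b ^ (b - a) = real a / real b"
proof -
  have e: "real b - real a = real (b - a)" using assms by auto
  show zp: "zprime a b > 0" using assms unfolding zprime_def by simp
  have "zprime a b ^ (b - a) = zprime a b powr real (b - a)"
    using zp by (simp add: powr_realpow)
  also have "\<dots> = real a / real b"
    unfolding zprime_def e powr_powr using assms by simp
  finally show "zprime a b ^ (b - a) = real a / real b" .
qed

lemma zprime_less_one:
  fixes a b :: nat
  assumes "1 \<le> a" "a < b"
  shows "zprime a b < 1"
proof (rule ccontr)
  assume "\<not> zprime a b < 1"
  then have "1 \<le> zprime a b ^ (b - a)" by (simp add: one_le_power)
  then show False using zprime_power[OF assms] assms by simp
qed

text \<open>Z_0 is positive on (0,z') and negative on (z',1): it is a positive multiple of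
  z'^(b-a) - z^(b-a).\<close>
lemma Zj0_sign:
  fixes a b :: nat
  assumes "1 \<le> a" "a < b" "0 < z"
  shows "Zj a b 0 z > 0 \<longleftrightarrow> z < zprime a b" "Zj a b 0 z < 0 \<longleftrightarrow> zprime a b < z"
proof -
  define w where "w = zprime a b"
  define k where "k = b - a"
  have "w > 0" "w ^ k = real a / real b" "k > 0"
    using zprime_power[OF assms(1,2)] assms unfolding w_def k_def by auto
  define c where "c = z ^ (a - 1) * real b"
  have "c > 0" using assms unfolding c_def by simp
  have "Zj a b 0 z = z ^ (a - 1) * (real b * (w ^ k - z ^ k))"
    unfolding Zj0_factor[OF assms(1,2)] k_def[symmetric] \<open>w ^ k = real a / real b\<close>
    using assms by (simp add: field_simps)
  then have Z: "Zj a b 0 z = c * (w ^ k - z ^ k)" unfolding c_def by simp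
  have power_less: "x ^ k < y ^ k \<longleftrightarrow> x < y" if "0 \<le> x" "0 \<le> y" for x y :: real
    using power_mono_iff[OF that(2,1) \<open>k > 0\<close>] by (simp add: not_le[symmetric])
  show "Zj a b 0 z > 0 \<longleftrightarrow> z < zprime a b"
    using power_less[of z w] \<open>w > 0\<close> \<open>c > 0\<close> assms(3) unfolding Z w_def[symmetric]
    by (simp add: zero_less_mult_iff)
  show "Zj a b 0 z < 0 \<longleftrightarrow> zprime a b < z"
    using power_less[of w z] \<open>w > 0\<close> \<open>c > 0\<close> assms(3) unfolding Z w_def[symmetric]
    by (simp add: mult_less_0_iff)
qed

theorem mainTheorem9:
  fixes a b :: nat
  assumes "3 \<le> a" and "a < b"
  shows "(\<forall>z. 0 < z \<and> z < zprime a b \<longrightarrow> (deriv (Ttilde a b) z > 0 \<longleftrightarrow> gF a b z > 0))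
       \<and> (\<forall>z. zprime a b < z \<and> z < 1 \<longrightarrow> (deriv (Ttilde a b) z < 0 \<longleftrightarrow> gF a b z > 0))"
proof -
  have ab: "1 \<le> a" "a < b" using assms by auto
  define den where "den z = (1 - z) * (real a * real b * (real b - real a)) * z ^ (a + b - 2)" for z
  have deriv_Ttilde: "deriv (Ttilde a b) z = Zj a b 0 z * gF a b z / den z" "den z > 0"
    if "0 < z" "z < 1" for z
    using DERIV_imp_deriv[OF Ttilde_has_derivative[of a b z]] that assms unfolding den_def by auto
  show ?thesis
  proof (intro conjI allI impI)
    fix z assume z: "0 < z \<and> z < zprime a b"
    then have "z < 1" "Zj a b 0 z > 0" using zprime_less_one[OF ab] Zj0_sign[OF ab] by auto
    then show "deriv (Ttilde a b) z > 0 \<longleftrightarrow> gF a b z > 0"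
      using z deriv_Ttilde[of z] by (simp add: zero_less_divide_iff zero_less_mult_iff)
  next
    fix z assume z: "zprime a b < z \<and> z < 1"
    then have "0 < z" using zprime_power(1)[OF ab] by auto
    then have "Zj a b 0 z < 0" using z Zj0_sign[OF ab] by auto
    then show "deriv (Ttilde a b) z < 0 \<longleftrightarrow> gF a b z > 0"
      using z \<open>0 < z\<close> deriv_Ttilde[of z] by (simp add: divide_less_0_iff mult_less_0_iff)
  qed
qed

end
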